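(* Let $N=pq$ where $p<q$ are primes. Let $f\in\mathbb{Z}[X]$ and $d:=\deg f$. Let $n$ be the number of distinct zeros of $f$ modulo $p$ and $m$ the number of distinct zeros of $f$ modulo $q$. Then: (1) $\nu(f)=mp+nq-2nm$. (2) If $f\neq 0$ in $\mathbb{Z}_p[X]$ and in $\mathbb{Z}_q[X]$, and $d<p/2$, then $\nu(f)\leq dp+dq-2d^2$.
   Context: $Z_N=\{0,1,\dots,N-1\}$ and $\mathbb{Z}_n=\mathbb{Z}/n\mathbb{Z}$. For $g\in\mathbb{Z}[X]$, an element $x\in Z_N$ is called suitable for $g$ if $1<\gcd(g(x),N)<N$, and $\nu(g)$ denotes the number of $x\in Z_N$ suitable for $g$. *)

theory Defs
  imports "HOL-Computational_Algebra.Polynomial" "HOL-Number_Theory.Cong"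
begin

definition suitable :: "nat \<Rightarrow> int poly \<Rightarrow> nat \<Rightarrow> bool" where
  "suitable N g x \<longleftrightarrow> 1 < gcd (poly g (int x)) (int N) \<and> gcd (poly g (int x)) (int N) < int N"

definition nu :: "nat \<Rightarrow> int poly \<Rightarrow> nat" where
  "nu N g = card {x \<in> {0..<N}. suitable N g x}"

definition num_zeros_mod :: "nat \<Rightarrow> int poly \<Rightarrow> nat" where
  "num_zeros_mod r f = card {x \<in> {0..<r}. [poly f (int x) = 0] (mod int r)}"

definition nonzero_mod :: "nat \<Rightarrow> int poly \<Rightarrow> bool" where
  "nonzero_mod r f \<longleftrightarrow> (\<exists>i. \<not> int r dvd coeff f i)"

end

theory Submission
  imports Defs
begin

text \<open>
  Since \<open>N = pq\<close> is squarefree, \<open>gcd (g, N)\<close> is a proper divisor of \<open>N\<close> greater than 1 exactly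
  when \<open>g\<close> is divisible by one of \<open>p\<close>, \<open>q\<close> but not by the other. By the Chinese remainder
  theorem \<open>x \<mapsto> (x mod p, x mod q)\<close> is a bijection \<open>Z_N \<rightarrow> Z_p \<times> Z_q\<close>, and \<open>f(x) mod r\<close> only
  depends on \<open>x mod r\<close>; so the suitable \<open>x\<close> correspond to the pairs in which exactly one
  coordinate is a zero of \<open>f\<close>, of which there are \<open>n (q - m) + (p - n) m\<close>. For (2), a nonzero
  polynomial over \<open>Z_r\<close> has at most \<open>d\<close> roots, so \<open>n, m \<le> d\<close>, and the count increases in
  \<open>n\<close> and \<open>m\<close> as long as \<open>2d \<le> p \<le> q\<close>.
\<close>

lemma poly_cong:
  fixes f :: "'a :: unique_euclidean_ring poly"
  assumes "[a = b] (mod m)"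
  shows "[poly f a = poly f b] (mod m)"
  by (induction f) (simp_all add: assms cong_add cong_mult)

lemma poly_zero_cong_mod_iff:
  fixes f :: "int poly" and r x :: nat
  shows "[poly f (int x) = 0] (mod int r) \<longleftrightarrow> [poly f (int (x mod r)) = 0] (mod int r)"
proof -
  have "[int x = int (x mod r)] (mod int r)"
    by (simp add: cong_def zmod_int)
  then have "[poly f (int x) = poly f (int (x mod r))] (mod int r)"
    by (rule poly_cong)
  then show ?thesis
    by (simp add: cong_def)
qed

lemma nonzero_mod_iff_not_const_dvd: "nonzero_mod r f \<longleftrightarrow> \<not> [:int r:] dvd f"
  by (simp add: nonzero_mod_def const_poly_dvd_iff)

lemma nonzero_mod_synthetic_div:
  fixes f :: "int poly"
  assumes "nonzero_mod r f" and "[poly f a = 0] (mod int r)"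
  shows "nonzero_mod r (synthetic_div f a)"
proof -
  have f_eq: "f = [:- a, 1:] * synthetic_div f a + [:poly f a:]"
    by (rule synthetic_div_correct'[symmetric])
  have "[:int r:] dvd [:poly f a:]"
    using assms(2) by (simp add: cong_0_iff)
  then show ?thesis
    using assms(1) f_eq unfolding nonzero_mod_iff_not_const_dvd
    by (metis dvd_add dvd_mult)
qed

definition zeros_mod :: "nat \<Rightarrow> int poly \<Rightarrow> nat set" where
  "zeros_mod r f = {x \<in> {0..<r}. [poly f (int x) = 0] (mod int r)}"

lemma num_zeros_mod_eq_card: "num_zeros_mod r f = card (zeros_mod r f)"
  by (simp add: num_zeros_mod_def zeros_mod_def)

lemma zeros_mod_subset_insert_synthetic_div:
  fixes f :: "int poly" and p a :: nat
  assumes "prime p" and "a < p" and "[poly f (int a) = 0] (mod int p)"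
  shows "zeros_mod p f \<subseteq> insert a (zeros_mod p (synthetic_div f (int a)))"
proof
  fix x assume x: "x \<in> zeros_mod p f"
  define g where "g = synthetic_div f (int a)"
  have "poly f (int x) = (int x - int a) * poly g (int x) + poly f (int a)"
    unfolding g_def by (subst synthetic_div_correct'[symmetric, of f "int a"]) (simp add: algebra_simps)
  with x assms(3) have "int p dvd (int x - int a) * poly g (int x)"
    by (simp add: zeros_mod_def cong_0_iff dvd_add_left_iff)
  then have "int p dvd int x - int a \<or> int p dvd poly g (int x)"
    using assms(1) by (simp add: prime_dvd_mult_iff)
  moreover have "x = a" if "int p dvd int x - int a"
  proof -
    have "[int x = int a] (mod int p)"
      using that by (simp add: cong_iff_dvd_diff)
    then show ?thesis
      using x assms(2) cong_less_imp_eq_int[of "int x" "int p" "int a"] by (simp add: zeros_mod_def)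
  qed
  ultimately show "x \<in> insert a (zeros_mod p g)"
    using x by (auto simp: zeros_mod_def cong_0_iff)
qed

lemma num_zeros_mod_prime_le_degree:
  fixes f :: "int poly"
  assumes "prime p" and "nonzero_mod p f"
  shows "num_zeros_mod p f \<le> degree f"
  using assms(2) unfolding num_zeros_mod_eq_card
proof (induction "degree f" arbitrary: f rule: less_induct)
  case less
  show ?case
  proof (cases "zeros_mod p f = {}")
    case False
    then obtain a where a: "a < p" "[poly f (int a) = 0] (mod int p)"
      by (auto simp: zeros_mod_def)
    define g where "g = synthetic_div f (int a)"
    have "degree f \<noteq> 0"
    proof
      assume "degree f = 0"
      then obtain c where "f = [:c:]"
        by (rule degree_eq_zeroE)
      then show False
        using less.prems a(2) by (simp add: nonzero_mod_iff_not_const_dvd cong_0_iff)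
    qed
    then have deg_g: "degree g < degree f"
      by (simp add: g_def degree_synthetic_div)
    have "card (zeros_mod p f) \<le> card (insert a (zeros_mod p g))"
      using zeros_mod_subset_insert_synthetic_div[OF assms(1) a] unfolding g_def
      by (intro card_mono) (auto simp: zeros_mod_def)
    also have "\<dots> \<le> Suc (card (zeros_mod p g))"
      by (simp add: card_insert_le_m1)
    also have "\<dots> \<le> Suc (degree g)"
      using less.hyps[OF deg_g] nonzero_mod_synthetic_div[OF less.prems a(2)] by (simp add: g_def)
    finally show ?thesis
      using deg_g by simp
  qed simp
qed

lemma gcd_proper_divisor_of_prime_product_iff:
  fixes g p q :: int
  assumes "prime p" and "prime q" and "p \<noteq> q"
  shows "1 < gcd g (p * q) \<and> gcd g (p * q) < p * q \<longleftrightarrow> (p dvd g) \<noteq> (q dvd g)"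
proof -
  have "p * q > 0"
    using assms prime_gt_0_int by simp
  then have "gcd g (p * q) \<le> p * q"
    by (simp add: zdvd_imp_le)
  then have "gcd g (p * q) < p * q \<longleftrightarrow> \<not> p * q dvd g"
    using \<open>p * q > 0\<close> gcd_proj2_iff[of g "p * q"] by (auto simp: less_le)
  also have "p * q dvd g \<longleftrightarrow> p dvd g \<and> q dvd g"
    using assms primes_coprime[of p q] divides_mult[of p g q] by (auto dest: dvd_mult_left dvd_mult_right)
  finally have less_iff: "gcd g (p * q) < p * q \<longleftrightarrow> \<not> (p dvd g \<and> q dvd g)" .
  have "gcd g (p * q) \<noteq> 0"
    using \<open>p * q > 0\<close> by auto
  then have "1 < gcd g (p * q) \<longleftrightarrow> \<not> coprime g (p * q)"
    by (smt (verit) coprime_iff_gcd_eq_1 gcd_ge_0_int)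
  also have "\<dots> \<longleftrightarrow> p dvd g \<or> q dvd g"
  proof -
    have "coprime g r \<longleftrightarrow> \<not> r dvd g" if "prime r" for r :: int
      using that prime_imp_coprime coprime_common_divisor not_prime_unit
      by (metis coprime_commute dvd_refl)
    then show ?thesis
      using assms by simp
  qed
  finally show ?thesis
    using less_iff by blast
qed

lemma bij_betw_mod_pair:
  fixes m1 m2 :: nat
  assumes "coprime m1 m2" and "m1 > 0" and "m2 > 0"
  shows "bij_betw (\<lambda>x. (x mod m1, x mod m2)) {0..<m1 * m2} ({0..<m1} \<times> {0..<m2})"
proof -
  let ?h = "\<lambda>x. (x mod m1, x mod m2)"
  have inj: "inj_on ?h {0..<m1 * m2}"
  proof (rule inj_onI)
    fix x y assume "x \<in> {0..<m1 * m2}" "y \<in> {0..<m1 * m2}" "?h x = ?h y"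
    moreover from \<open>?h x = ?h y\<close> have "[x = y] (mod m1)" and "[x = y] (mod m2)"
      by (simp_all add: cong_def)
    then have "[x = y] (mod m1 * m2)"
      using assms(1) by (rule coprime_cong_mult_nat)
    ultimately show "x = y"
      using cong_less_imp_eq_nat by simp
  qed
  have "?h ` {0..<m1 * m2} = {0..<m1} \<times> {0..<m2}"
  proof (rule card_seteq)
    show "?h ` {0..<m1 * m2} \<subseteq> {0..<m1} \<times> {0..<m2}"
      using assms(2,3) by auto
    show "card ({0..<m1} \<times> {0..<m2}) \<le> card (?h ` {0..<m1 * m2})"
      using inj by (simp add: card_image card_cartesian_product)
  qed simp
  with inj show ?thesis
    unfolding bij_betw_def ..
qed

lemma card_mod_pair_filter:
  fixes m1 m2 :: nat
  assumes "coprime m1 m2" and "m1 > 0" and "m2 > 0"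
  shows "card {x \<in> {0..<m1 * m2}. R (x mod m1, x mod m2)} = card {y \<in> {0..<m1} \<times> {0..<m2}. R y}"
proof -
  let ?h = "\<lambda>x. (x mod m1, x mod m2)"
  have bij: "bij_betw ?h {0..<m1 * m2} ({0..<m1} \<times> {0..<m2})"
    by (rule bij_betw_mod_pair[OF assms])
  have "inj_on ?h {x \<in> {0..<m1 * m2}. R (?h x)}"
    using bij_betw_imp_inj_on[OF bij] by (rule inj_on_subset) blast
  then have "card {x \<in> {0..<m1 * m2}. R (?h x)} = card (?h ` {x \<in> {0..<m1 * m2}. R (?h x)})"
    by (simp add: card_image)
  also have "?h ` {x \<in> {0..<m1 * m2}. R (?h x)} = {y \<in> ?h ` {0..<m1 * m2}. R y}"
    by blast
  finally show ?thesis
    unfolding bij_betw_imp_surj_on[OF bij] .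
qed

lemma card_product_filter_xor:
  assumes "finite S" and "finite T" and "A \<subseteq> S" and "B \<subseteq> T"
  shows "card {y \<in> S \<times> T. (fst y \<in> A) \<noteq> (snd y \<in> B)}
           = card A * (card T - card B) + (card S - card A) * card B"
proof -
  have "{y \<in> S \<times> T. (fst y \<in> A) \<noteq> (snd y \<in> B)} = A \<times> (T - B) \<union> (S - A) \<times> B"
    using assms(3,4) by auto
  moreover have fin: "finite A" "finite B"
    using assms finite_subset by auto
  then have "card (A \<times> (T - B) \<union> (S - A) \<times> B) = card (A \<times> (T - B)) + card ((S - A) \<times> B)"
    using assms by (intro card_Un_disjoint) auto
  ultimately show ?thesis
    using assms fin by (simp add: card_cartesian_product card_Diff_subset)
qed

lemma suitable_prime_product_iff:
  fixes f :: "int poly" and p q x :: nat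
  assumes "prime p" and "prime q" and "p \<noteq> q"
  shows "suitable (p * q) f x \<longleftrightarrow> (x mod p \<in> zeros_mod p f) \<noteq> (x mod q \<in> zeros_mod q f)"
proof -
  have "x mod r \<in> zeros_mod r f \<longleftrightarrow> int r dvd poly f (int x)" if "prime r" for r
    using that prime_gt_0_nat poly_zero_cong_mod_iff[of f x r] by (simp add: zeros_mod_def cong_0_iff)
  then show ?thesis
    using assms gcd_proper_divisor_of_prime_product_iff[of "int p" "int q" "poly f (int x)"]
    by (simp add: suitable_def)
qed

lemma nu_prime_product:
  fixes f :: "int poly" and p q :: nat
  assumes "prime p" and "prime q" and "p \<noteq> q"
  shows "nu (p * q) f = num_zeros_mod p f * (q - num_zeros_mod q f)
                        + (p - num_zeros_mod p f) * num_zeros_mod q f"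
proof -
  have "coprime p q" and "p > 0" and "q > 0"
    using assms by (simp_all add: primes_coprime prime_gt_0_nat)
  have "nu (p * q) f = card {x \<in> {0..<p * q}. (x mod p \<in> zeros_mod p f) \<noteq> (x mod q \<in> zeros_mod q f)}"
    using suitable_prime_product_iff[OF assms] by (simp add: nu_def)
  also have "\<dots> = card {y \<in> {0..<p} \<times> {0..<q}. (fst y \<in> zeros_mod p f) \<noteq> (snd y \<in> zeros_mod q f)}"
    using card_mod_pair_filter[OF \<open>coprime p q\<close> \<open>p > 0\<close> \<open>q > 0\<close>,
        of "\<lambda>y. (fst y \<in> zeros_mod p f) \<noteq> (snd y \<in> zeros_mod q f)"] by simp
  also have "\<dots> = card (zeros_mod p f) * (q - card (zeros_mod q f))
                  + (p - card (zeros_mod p f)) * card (zeros_mod q f)"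
    by (subst card_product_filter_xor) (auto simp: zeros_mod_def)
  finally show ?thesis
    by (simp add: num_zeros_mod_eq_card)
qed

lemma num_zeros_mod_le: "num_zeros_mod r f \<le> r"
proof -
  have "zeros_mod r f \<subseteq> {0..<r}"
    by (auto simp: zeros_mod_def)
  then show ?thesis
    unfolding num_zeros_mod_eq_card using card_mono[of "{0..<r}"] by fastforce
qed

text \<open>The difference of the two sides is \<open>(d - n) (q - 2d) + (d - m) (p - 2n)\<close>.\<close>
lemma xor_count_le:
  fixes n m d p q :: int
  assumes "n \<le> d" and "m \<le> d" and "2 * d \<le> p" and "p \<le> q"
  shows "m * p + n * q - 2 * n * m \<le> d * p + d * q - 2 * d ^ 2"
proof -
  have "0 \<le> (d - n) * (q - 2 * d) + (d - m) * (p - 2 * n)"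
    using assms by (intro add_nonneg_nonneg mult_nonneg_nonneg) linarith+
  then show ?thesis
    by (simp add: algebra_simps power2_eq_square)
qed

theorem theorem2p8:
  fixes p q N :: nat and f :: "int poly"
  assumes "prime p" and "prime q" and "p < q" and "N = p * q"
  defines "d \<equiv> degree f"
      and "n \<equiv> num_zeros_mod p f"
      and "m \<equiv> num_zeros_mod q f"
  shows "int (nu N f) = int m * int p + int n * int q - 2 * int n * int m \<and>
         (nonzero_mod p f \<and> nonzero_mod q f \<and> real d < real p / 2 \<longrightarrow>
          int (nu N f) \<le> int d * int p + int d * int q - 2 * int d ^ 2)"
proof -
  have "nu N f = n * (q - m) + (p - n) * m"
    using nu_prime_product[OF assms(1,2)] assms(3,4) by (simp add: n_def m_def)
  moreover have "n \<le> p" and "m \<le> q"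
    by (simp_all add: n_def m_def num_zeros_mod_le)
  ultimately have "int (nu N f) = int n * (int q - int m) + (int p - int n) * int m"
    by (simp add: of_nat_diff)
  then have nu_eq: "int (nu N f) = int m * int p + int n * int q - 2 * int n * int m"
    by (simp add: algebra_simps)
  moreover have "int (nu N f) \<le> int d * int p + int d * int q - 2 * int d ^ 2"
    if "nonzero_mod p f" and "nonzero_mod q f" and "real d < real p / 2"
  proof -
    have "n \<le> d" and "m \<le> d"
      using that assms(1,2) num_zeros_mod_prime_le_degree by (simp_all add: n_def m_def d_def)
    moreover have "2 * d \<le> p"
      using that(3) by linarith
    ultimately show ?thesis
      unfolding nu_eq using assms(3) by (intro xor_count_le) simp_all
  qed
  ultimately show ?thesis
    by blast
qed

end
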